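(* For $1\le\ell\le n$ let $s_{n,\ell}$ be the number of permutations $\sigma$ of $\{1,\dots,n\}$ avoiding both $1324$ and $2134$ with $\sigma(n)=\ell$. Then \begin{align*} s_{1,1}&=1,\quad s_{2,1}=s_{2,2}=1,\\ s_{n,1}&=s_{n,2}=s_{n,3}=\sum_{m=1}^{n-1}s_{n-1,m}\quad\text{for }n\ge3,\\ s_{n,\ell}&=2s_{n-1,\ell-1}+\sum_{m=\ell}^{n-1}s_{n-1,m}\quad\text{for }4\le\ell\le n. \end{align*}
   Context: A permutation avoids a pattern $p$ if no subsequence of its one-line notation is order-isomorphic to $p$. *)

theory Defs
  imports Main "HOL-Combinatorics.List_Permutation"
begin

text \<open>A permutation of {1..n} is represented by its one-line notation,
a list that is a permutation of the list [1..n].\<close>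

definition contains_pattern :: "nat list \<Rightarrow> nat list \<Rightarrow> bool" where
  "contains_pattern sigma p \<longleftrightarrow>
     (\<exists>idx :: nat list. length idx = length p \<and> sorted_wrt (<) idx \<and>
        (\<forall>i\<in>set idx. i < length sigma) \<and>
        (\<forall>a < length p. \<forall>b < length p.
            (sigma ! (idx ! a) < sigma ! (idx ! b)) \<longleftrightarrow> (p ! a < p ! b)))"

definition avoids :: "nat list \<Rightarrow> nat list \<Rightarrow> bool" where
  "avoids sigma p \<longleftrightarrow> \<not> contains_pattern sigma p"

definition s :: "nat \<Rightarrow> nat \<Rightarrow> nat" where
  "s n l = card {sigma :: nat list. mset sigma = mset [1..<n+1] \<and>
                 avoids sigma [1,3,2,4] \<and> avoids sigma [2,1,3,4] \<and>
                 sigma ! (n - 1) = l}"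

end

theory Submission
  imports Defs "HOL-Combinatorics.Multiset_Permutations"
begin

(* Write sigma = insert_last l tau, where tau is the standardisation of sigma with its last
   entry l removed.  Then sigma avoids 1324 and 2134 iff tau does and tau has no occurrence of
   132 or 213 using only values below l.  For l <= 3 this extra condition is empty, which gives
   s(n,1) = s(n,2) = s(n,3) = sum_m s(n-1,m).  For l >= 4 it holds automatically when the last
   entry of tau is at least l, since an offending occurrence would extend by that entry to a
   1324 or a 2134; this gives the sum over m >= l.  Otherwise tau = insert_last m rho with m < l,
   and the condition becomes the same condition on rho with bound l - 1 together with a
   condition on m alone, which holds for exactly two values: m = 1 and m = r + 1, where r is the
   last entry of rho below l - 1.  This gives the term 2 s(n-1,l-1). *)

section \<open>Occurrences of 1324 and 2134\<close>

lemma contains_pattern_length_4: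
  "contains_pattern xs [a, b, c, d] \<longleftrightarrow>
     (\<exists>i j k l. i < j \<and> j < k \<and> k < l \<and> l < length xs \<and>
        (\<forall>u<4. \<forall>v<4. xs ! ([i, j, k, l] ! u) < xs ! ([i, j, k, l] ! v) \<longleftrightarrow>
                      [a, b, c, d] ! u < [a, b, c, d] ! v))" (is "_ \<longleftrightarrow> ?occurs")
proof
  assume "contains_pattern xs [a, b, c, d]"
  then obtain idx where idx: "length idx = Suc (Suc (Suc (Suc 0)))" "sorted_wrt (<) idx"
      "\<forall>i\<in>set idx. i < length xs"
    and iso: "\<forall>u<4. \<forall>v<4. xs ! (idx ! u) < xs ! (idx ! v) \<longleftrightarrow> [a, b, c, d] ! u < [a, b, c, d] ! v"
    unfolding contains_pattern_def by auto
  then obtain i j k l where "idx = [i, j, k, l]"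
    by (auto simp: length_Suc_conv)
  with idx iso show ?occurs
    by auto
next
  assume ?occurs
  then obtain i j k l where "i < j" "j < k" "k < l" "l < length xs"
    and "\<forall>u<4. \<forall>v<4. xs ! ([i, j, k, l] ! u) < xs ! ([i, j, k, l] ! v) \<longleftrightarrow>
                        [a, b, c, d] ! u < [a, b, c, d] ! v"
    by blast
  then show "contains_pattern xs [a, b, c, d]"
    unfolding contains_pattern_def by (intro exI[of _ "[i, j, k, l]"]) auto
qed

definition has_1324 :: "nat list \<Rightarrow> bool" where
  "has_1324 xs \<longleftrightarrow> (\<exists>i j k l. i < j \<and> j < k \<and> k < l \<and> l < length xs \<and>
     xs!i < xs!k \<and> xs!k < xs!j \<and> xs!j < xs!l)"

definition has_2134 :: "nat list \<Rightarrow> bool" where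
  "has_2134 xs \<longleftrightarrow> (\<exists>i j k l. i < j \<and> j < k \<and> k < l \<and> l < length xs \<and>
     xs!j < xs!i \<and> xs!i < xs!k \<and> xs!k < xs!l)"

lemma contains_1324_iff: "contains_pattern xs [1, 3, 2, 4] \<longleftrightarrow> has_1324 xs"
proof -
  have "(\<forall>u<4. \<forall>v<4. xs ! ([i, j, k, l] ! u) < xs ! ([i, j, k, l] ! v) \<longleftrightarrow>
                    [1, 3, 2, 4::nat] ! u < [1, 3, 2, 4] ! v) \<longleftrightarrow>
      xs!i < xs!k \<and> xs!k < xs!j \<and> xs!j < xs!l" for i j k l
    by (simp add: All_less_Suc numeral_eq_Suc) arith
  then show ?thesis
    unfolding contains_pattern_length_4 has_1324_def by simp
qed

lemma contains_2134_iff: "contains_pattern xs [2, 1, 3, 4] \<longleftrightarrow> has_2134 xs"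
proof -
  have "(\<forall>u<4. \<forall>v<4. xs ! ([i, j, k, l] ! u) < xs ! ([i, j, k, l] ! v) \<longleftrightarrow>
                    [2, 1, 3, 4::nat] ! u < [2, 1, 3, 4] ! v) \<longleftrightarrow>
      xs!j < xs!i \<and> xs!i < xs!k \<and> xs!k < xs!l" for i j k l
    by (simp add: All_less_Suc numeral_eq_Suc) arith
  then show ?thesis
    unfolding contains_pattern_length_4 has_2134_def by simp
qed

section \<open>Removing the last entry of a permutation\<close>

definition shift_from :: "nat \<Rightarrow> nat \<Rightarrow> nat" where
  "shift_from m x = (if m \<le> x then Suc x else x)"

definition unshift_from :: "nat \<Rightarrow> nat \<Rightarrow> nat" where
  "unshift_from m x = (if m < x then x - 1 else x)"

lemma shift_from_less_iff [simp]: "shift_from m a < shift_from m b \<longleftrightarrow> a < b"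
  by (simp add: shift_from_def)

lemma shift_from_less_self_iff [simp]: "shift_from m a < m \<longleftrightarrow> a < m"
  by (simp add: shift_from_def)

lemma less_shift_from_iff [simp]: "m < shift_from m a \<longleftrightarrow> m \<le> a"
  by (simp add: shift_from_def)

lemma shift_from_neq [simp]: "shift_from m a \<noteq> m" "m \<noteq> shift_from m a"
  by (simp_all add: shift_from_def)

lemma shift_from_less_iff_pred: "m < L \<Longrightarrow> shift_from m a < L \<longleftrightarrow> a < L - 1"
  by (auto simp: shift_from_def)

lemma inj_shift_from: "inj (shift_from m)"
  by (rule injI) (auto simp: shift_from_def split: if_splits)

lemma unshift_shift_from [simp]: "unshift_from m (shift_from m x) = x"
  by (simp add: shift_from_def unshift_from_def)

lemma shift_unshift_from: "x \<noteq> m \<Longrightarrow> shift_from m (unshift_from m x) = x"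
  by (auto simp: shift_from_def unshift_from_def)

lemma shift_from_image_atLeastAtMost:
  assumes "m \<in> {1..Suc N}"
  shows "shift_from m ` {1..N} = {1..Suc N} - {m}"
proof
  show "shift_from m ` {1..N} \<subseteq> {1..Suc N} - {m}"
    by (auto simp: shift_from_def)
  show "{1..Suc N} - {m} \<subseteq> shift_from m ` {1..N}"
  proof
    fix x assume x: "x \<in> {1..Suc N} - {m}"
    then have "unshift_from m x \<in> {1..N}"
      using assms by (auto simp: unshift_from_def)
    moreover have "x = shift_from m (unshift_from m x)"
      using x by (simp add: shift_unshift_from)
    ultimately show "x \<in> shift_from m ` {1..N}"
      by blast
  qed
qed

definition insert_last :: "nat \<Rightarrow> nat list \<Rightarrow> nat list" where
  "insert_last m xs = map (shift_from m) xs @ [m]"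

definition delete_last :: "nat list \<Rightarrow> nat list" where
  "delete_last ys = map (unshift_from (last ys)) (butlast ys)"

lemma length_insert_last [simp]: "length (insert_last m xs) = Suc (length xs)"
  by (simp add: insert_last_def)

lemma last_insert_last [simp]: "last (insert_last m xs) = m"
  by (simp add: insert_last_def)

lemma nth_insert_last:
  "i \<le> length xs \<Longrightarrow> insert_last m xs ! i = (if i < length xs then shift_from m (xs ! i) else m)"
  by (simp add: insert_last_def nth_append)

lemma set_insert_last: "set (insert_last m xs) = insert m (shift_from m ` set xs)"
  by (simp add: insert_last_def)

lemma delete_insert_last [simp]: "delete_last (insert_last m xs) = xs"
  by (simp add: insert_last_def delete_last_def map_idI)

lemma insert_delete_last:
  assumes "ys \<noteq> []" "distinct ys"
  shows "insert_last (last ys) (delete_last ys) = ys"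
proof -
  have "distinct (butlast ys @ [last ys])"
    using assms by simp
  then have "shift_from (last ys) (unshift_from (last ys) x) = x" if "x \<in> set (butlast ys)" for x
    using that by (intro shift_unshift_from) auto
  then have "map (shift_from (last ys)) (delete_last ys) = butlast ys"
    unfolding delete_last_def map_map by (simp add: map_idI)
  with assms(1) show ?thesis
    by (simp add: insert_last_def)
qed

lemma insert_last_in_permutations:
  assumes xs: "xs \<in> permutations_of_set {1..N}" and m: "m \<in> {1..Suc N}"
  shows "insert_last m xs \<in> permutations_of_set {1..Suc N}"
proof
  have "set xs = {1..N}" "distinct xs"
    using xs by (auto dest: permutations_of_setD)
  then have "set (insert_last m xs) = insert m ({1..Suc N} - {m})"
    unfolding set_insert_last by (simp only: shift_from_image_atLeastAtMost[OF m])
  then show "set (insert_last m xs) = {1..Suc N}"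
    using insert_Diff[OF m] by (simp only:)
  show "distinct (insert_last m xs)"
    using \<open>distinct xs\<close> by (auto simp: insert_last_def distinct_map inj_on_subset[OF inj_shift_from])
qed

lemma delete_last_in_permutations:
  assumes ys: "ys \<in> permutations_of_set {1..Suc N}"
  shows "delete_last ys \<in> permutations_of_set {1..N}"
proof
  have set_ys: "set ys = {1..Suc N}" and "distinct ys"
    using ys by (auto dest: permutations_of_setD)
  moreover have ne: "ys \<noteq> []"
    using set_ys by auto
  ultimately have ins: "insert_last (last ys) (delete_last ys) = ys"
    by (simp add: insert_delete_last)
  with \<open>distinct ys\<close> have dist: "distinct (map (shift_from (last ys)) (delete_last ys) @ [last ys])"
    by (simp add: insert_last_def)
  then show "distinct (delete_last ys)"
    by (simp add: distinct_map)
  have "insert (last ys) (shift_from (last ys) ` set (delete_last ys)) = {1..Suc N}"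
    using set_ys ins by (simp flip: set_insert_last)
  moreover have "last ys \<notin> shift_from (last ys) ` set (delete_last ys)"
    using dist by auto
  ultimately have "shift_from (last ys) ` set (delete_last ys) = {1..Suc N} - {last ys}"
    by blast
  moreover have "shift_from (last ys) ` {1..N} = {1..Suc N} - {last ys}"
    using ne set_ys by (intro shift_from_image_atLeastAtMost) auto
  ultimately have "shift_from (last ys) ` set (delete_last ys) = shift_from (last ys) ` {1..N}"
    by (simp only:)
  then show "set (delete_last ys) = {1..N}"
    by (simp add: inj_image_eq_iff inj_shift_from)
qed

lemma card_permutations_last_in:
  assumes A: "A \<subseteq> {1..Suc N}"
  shows "card {ys \<in> permutations_of_set {1..Suc N}. last ys \<in> A \<and> P ys} =
    (\<Sum>m\<in>A. card {xs \<in> permutations_of_set {1..N}. P (insert_last m xs)})"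
proof -
  let ?fibre = "\<lambda>m. {xs \<in> permutations_of_set {1..N}. P (insert_last m xs)}"
  have "{ys \<in> permutations_of_set {1..Suc N}. last ys \<in> A \<and> P ys} = (\<Union>m\<in>A. insert_last m ` ?fibre m)"
  proof (intro equalityI subsetI)
    fix ys assume "ys \<in> {ys \<in> permutations_of_set {1..Suc N}. last ys \<in> A \<and> P ys}"
    then have ys: "ys \<in> permutations_of_set {1..Suc N}" "last ys \<in> A" "P ys" by auto
    then have "ys \<noteq> []" "distinct ys"
      by (auto dest: permutations_of_setD)
    then have ys_eq: "ys = insert_last (last ys) (delete_last ys)"
      by (simp add: insert_delete_last)
    have "delete_last ys \<in> ?fibre (last ys)"
      using ys(3) delete_last_in_permutations[OF ys(1)] by (simp flip: ys_eq)
    with ys(2) show "ys \<in> (\<Union>m\<in>A. insert_last m ` ?fibre m)"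
      by (subst ys_eq) blast
  next
    fix ys assume "ys \<in> (\<Union>m\<in>A. insert_last m ` ?fibre m)"
    then obtain m xs where "m \<in> A" "xs \<in> ?fibre m" "ys = insert_last m xs" by blast
    moreover from A \<open>m \<in> A\<close> have "m \<in> {1..Suc N}" by blast
    ultimately show "ys \<in> {ys \<in> permutations_of_set {1..Suc N}. last ys \<in> A \<and> P ys}"
      using insert_last_in_permutations by simp
  qed
  also have "card \<dots> = (\<Sum>m\<in>A. card (insert_last m ` ?fibre m))"
  proof (rule card_UN_disjoint)
    show "finite A"
      using A finite_subset by blast
  qed (auto dest: arg_cong[where f = last])
  also have "\<dots> = (\<Sum>m\<in>A. card (?fibre m))"
    by (intro sum.cong refl card_image inj_on_inverseI[where g = delete_last]) simp
  finally show ?thesis .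
qed

section \<open>Occurrences through the last entry\<close>

lemma ex3_insert_last:
  "(\<exists>i j k. i < j \<and> j < k \<and> k < length (insert_last m xs) \<and>
      R (insert_last m xs ! i) (insert_last m xs ! j) (insert_last m xs ! k)) \<longleftrightarrow>
    (\<exists>i j k. i < j \<and> j < k \<and> k < length xs \<and>
      R (shift_from m (xs ! i)) (shift_from m (xs ! j)) (shift_from m (xs ! k))) \<or>
    (\<exists>i j. i < j \<and> j < length xs \<and> R (shift_from m (xs ! i)) (shift_from m (xs ! j)) m)"
  (is "?occurs \<longleftrightarrow> ?before \<or> ?ending")
proof
  show "?occurs \<Longrightarrow> ?before \<or> ?ending"
    by (auto simp: less_Suc_eq nth_insert_last)
  show "?before \<or> ?ending \<Longrightarrow> ?occurs"
  proof (elim disjE exE conjE)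
    fix i j k assume "i < j" "j < k" "k < length xs"
      "R (shift_from m (xs ! i)) (shift_from m (xs ! j)) (shift_from m (xs ! k))"
    then show ?occurs
      by (intro exI[of _ i] exI[of _ j] exI[of _ k]) (simp add: nth_insert_last)
  next
    fix i j assume "i < j" "j < length xs" "R (shift_from m (xs ! i)) (shift_from m (xs ! j)) m"
    then show ?occurs
      by (intro exI[of _ i] exI[of _ j] exI[of _ "length xs"]) (simp add: nth_insert_last)
  qed
qed

lemma ex4_insert_last:
  "(\<exists>i j k l. i < j \<and> j < k \<and> k < l \<and> l < length (insert_last m xs) \<and>
      R (insert_last m xs ! i) (insert_last m xs ! j) (insert_last m xs ! k) (insert_last m xs ! l)) \<longleftrightarrow>
    (\<exists>i j k l. i < j \<and> j < k \<and> k < l \<and> l < length xs \<and>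
      R (shift_from m (xs ! i)) (shift_from m (xs ! j)) (shift_from m (xs ! k)) (shift_from m (xs ! l))) \<or>
    (\<exists>i j k. i < j \<and> j < k \<and> k < length xs \<and>
      R (shift_from m (xs ! i)) (shift_from m (xs ! j)) (shift_from m (xs ! k)) m)"
  (is "?occurs \<longleftrightarrow> ?before \<or> ?ending")
proof
  show "?occurs \<Longrightarrow> ?before \<or> ?ending"
    by (auto simp: less_Suc_eq nth_insert_last)
  show "?before \<or> ?ending \<Longrightarrow> ?occurs"
  proof (elim disjE exE conjE)
    fix i j k l assume "i < j" "j < k" "k < l" "l < length xs"
      "R (shift_from m (xs ! i)) (shift_from m (xs ! j)) (shift_from m (xs ! k)) (shift_from m (xs ! l))"
    then show ?occurs
      by (intro exI[of _ i] exI[of _ j] exI[of _ k] exI[of _ l]) (simp add: nth_insert_last)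
  next
    fix i j k assume "i < j" "j < k" "k < length xs"
      "R (shift_from m (xs ! i)) (shift_from m (xs ! j)) (shift_from m (xs ! k)) m"
    then show ?occurs
      by (intro exI[of _ i] exI[of _ j] exI[of _ k] exI[of _ "length xs"]) (simp add: nth_insert_last)
  qed
qed

definition has_132_below :: "nat \<Rightarrow> nat list \<Rightarrow> bool" where
  "has_132_below L xs \<longleftrightarrow> (\<exists>i j k. i < j \<and> j < k \<and> k < length xs \<and>
     xs!i < xs!k \<and> xs!k < xs!j \<and> xs!j < L)"

definition has_213_below :: "nat \<Rightarrow> nat list \<Rightarrow> bool" where
  "has_213_below L xs \<longleftrightarrow> (\<exists>i j k. i < j \<and> j < k \<and> k < length xs \<and>
     xs!j < xs!i \<and> xs!i < xs!k \<and> xs!k < L)"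

definition avoids_132_213_below :: "nat \<Rightarrow> nat list \<Rightarrow> bool" where
  "avoids_132_213_below L xs \<longleftrightarrow> \<not> has_132_below L xs \<and> \<not> has_213_below L xs"

definition admissible_last :: "nat \<Rightarrow> nat \<Rightarrow> nat list \<Rightarrow> bool" where
  "admissible_last m K xs \<longleftrightarrow> \<not> (\<exists>i j. i < j \<and> j < length xs \<and>
     (xs!i < m \<and> m \<le> xs!j \<and> xs!j < K \<or> xs!j < xs!i \<and> xs!i < m))"

lemma has_1324_insert_last: "has_1324 (insert_last m xs) \<longleftrightarrow> has_1324 xs \<or> has_132_below m xs"
  unfolding has_1324_def has_132_below_def
  using ex4_insert_last[where R = "\<lambda>a b c d. a < c \<and> c < b \<and> b < d"] by simp

lemma has_2134_insert_last: "has_2134 (insert_last m xs) \<longleftrightarrow> has_2134 xs \<or> has_213_below m xs"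
  unfolding has_2134_def has_213_below_def
  using ex4_insert_last[where R = "\<lambda>a b c d. b < a \<and> a < c \<and> c < d"] by simp

lemma avoids_1324_2134_insert_last:
  "\<not> has_1324 (insert_last m xs) \<and> \<not> has_2134 (insert_last m xs) \<longleftrightarrow>
    \<not> has_1324 xs \<and> \<not> has_2134 xs \<and> avoids_132_213_below m xs"
  by (auto simp: has_1324_insert_last has_2134_insert_last avoids_132_213_below_def)

lemma has_132_below_insert_last:
  "m < L \<Longrightarrow> has_132_below L (insert_last m xs) \<longleftrightarrow>
    has_132_below (L - 1) xs \<or> (\<exists>i j. i < j \<and> j < length xs \<and> xs!i < m \<and> m \<le> xs!j \<and> xs!j < L - 1)"
  unfolding has_132_below_def
  using ex3_insert_last[where R = "\<lambda>a b c. a < c \<and> c < b \<and> b < L"] by (simp add: shift_from_less_iff_pred)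

lemma has_213_below_insert_last:
  "m < L \<Longrightarrow> has_213_below L (insert_last m xs) \<longleftrightarrow>
    has_213_below (L - 1) xs \<or> (\<exists>i j. i < j \<and> j < length xs \<and> xs!j < xs!i \<and> xs!i < m)"
  unfolding has_213_below_def
  using ex3_insert_last[where R = "\<lambda>a b c. b < a \<and> a < c \<and> c < L"] by (simp add: shift_from_less_iff_pred)

lemma avoids_132_213_below_insert_last:
  "m < L \<Longrightarrow> avoids_132_213_below L (insert_last m xs) \<longleftrightarrow>
    avoids_132_213_below (L - 1) xs \<and> admissible_last m (L - 1) xs"
  unfolding avoids_132_213_below_def admissible_last_def
  by (simp add: has_132_below_insert_last has_213_below_insert_last) blast

lemma avoids_132_213_below_mono:
  "avoids_132_213_below L xs \<Longrightarrow> L' \<le> L \<Longrightarrow> avoids_132_213_below L' xs"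
  unfolding avoids_132_213_below_def has_132_below_def has_213_below_def
  by (meson order_less_le_trans)

lemma gr0_nth_if_zero_notin_set: "0 \<notin> set xs \<Longrightarrow> i < length xs \<Longrightarrow> (0::nat) < xs ! i"
  by (metis gr0I nth_mem)

lemma avoids_132_213_below_3:
  assumes "0 \<notin> set xs" "L \<le> 3"
  shows "avoids_132_213_below L xs"
proof -
  note pos = gr0_nth_if_zero_notin_set[OF assms(1)]
  show ?thesis
    unfolding avoids_132_213_below_def has_132_below_def has_213_below_def
  proof (intro conjI notI; elim exE conjE)
    fix i j k assume H: "i < j" "j < k" "k < length xs" "xs!i < xs!k" "xs!k < xs!j" "xs!j < L"
    then have "0 < xs!i" by (intro pos) simp
    with H assms(2) show False by linarith
  next
    fix i j k assume H: "i < j" "j < k" "k < length xs" "xs!j < xs!i" "xs!i < xs!k" "xs!k < L"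
    then have "0 < xs!j" by (intro pos) simp
    with H assms(2) show False by linarith
  qed
qed
lemma avoids_132_213_below_if_le_last:
  assumes "\<not> has_1324 xs" "\<not> has_2134 xs" "xs \<noteq> []" "L \<le> last xs"
  shows "avoids_132_213_below L xs"
proof -
  define n where "n = length xs - 1"
  have n: "n < length xs" "xs ! n = last xs"
    using assms(3) by (simp_all add: n_def last_conv_nth)
  have before_n: "k < n" if "k < length xs" "xs ! k < L" for k
    using that n assms(4) unfolding n_def by (cases "k = length xs - 1") auto
  show ?thesis
    unfolding avoids_132_213_below_def
  proof (intro conjI notI)
    assume "has_132_below L xs"
    then obtain i j k where H: "i < j" "j < k" "k < length xs" "xs!i < xs!k" "xs!k < xs!j" "xs!j < L"
      unfolding has_132_below_def by blast
    then have "has_1324 xs"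
      unfolding has_1324_def using n assms(4) before_n[of k]
      by (intro exI[of _ i] exI[of _ j] exI[of _ k] exI[of _ n]) auto
    with assms(1) show False ..
  next
    assume "has_213_below L xs"
    then obtain i j k where H: "i < j" "j < k" "k < length xs" "xs!j < xs!i" "xs!i < xs!k" "xs!k < L"
      unfolding has_213_below_def by blast
    then have "has_2134 xs"
      unfolding has_2134_def using n assms(4) before_n[of k]
      by (intro exI[of _ i] exI[of _ j] exI[of _ k] exI[of _ n]) auto
    with assms(2) show False ..
  qed
qed

section \<open>Admissible last entries\<close>

definition is_last_below :: "nat \<Rightarrow> nat list \<Rightarrow> nat \<Rightarrow> bool" where
  "is_last_below K xs q \<longleftrightarrow> q < length xs \<and> xs!q < K \<and> (\<forall>i. q < i \<and> i < length xs \<longrightarrow> K \<le> xs!i)"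

lemma is_last_below_less:
  assumes "is_last_below K xs q" "j < length xs" "xs!j < K" "j \<noteq> q"
  shows "j < q"
proof (rule ccontr)
  assume "\<not> j < q"
  with assms(4) have "q < j"
    by simp
  with assms(1-3) show False
    unfolding is_last_below_def by auto
qed

lemma ex_is_last_below:
  assumes "x \<in> set xs" "x < K"
  shows "\<exists>q. is_last_below K xs q"
proof -
  define Q where "Q = {i. i < length xs \<and> xs!i < K}"
  have "finite Q" "Q \<noteq> {}"
    using assms by (auto simp: Q_def in_set_conv_nth)
  then have max: "Max Q \<in> Q" "\<And>i. i \<in> Q \<Longrightarrow> i \<le> Max Q"
    by simp_all
  have "K \<le> xs!i" if "Max Q < i" "i < length xs" for i
  proof (rule ccontr)
    assume "\<not> K \<le> xs!i"
    with that(2) have "i \<in> Q"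
      by (simp add: Q_def)
    with max(2) that(1) show False
      by fastforce
  qed
  with max(1) have "is_last_below K xs (Max Q)"
    unfolding is_last_below_def Q_def by blast
  then show ?thesis ..
qed

lemma admissible_last_1:
  assumes "0 \<notin> set xs"
  shows "admissible_last 1 K xs"
  unfolding admissible_last_def
proof (intro notI; elim exE conjE)
  fix i j assume "i < j" "j < length xs"
    and "xs!i < 1 \<and> 1 \<le> xs!j \<and> xs!j < K \<or> xs!j < xs!i \<and> xs!i < 1"
  moreover have "0 < xs!i"
    using assms \<open>i < j\<close> \<open>j < length xs\<close> by (intro gr0_nth_if_zero_notin_set) auto
  ultimately show False
    by linarith
qed

lemma admissible_last_Suc_last_below:
  assumes "distinct xs" "avoids_132_213_below K xs" and q: "is_last_below K xs q"
  shows "admissible_last (Suc (xs!q)) K xs"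
proof -
  have q_bounds: "q < length xs" "xs!q < K"
    using q by (simp_all add: is_last_below_def)
  have less_q: "xs!i < xs!q" if "i < length xs" "xs!i < Suc (xs!q)" "i \<noteq> q" for i
  proof -
    have "xs!i \<noteq> xs!q"
      using nth_eq_iff_index_eq[OF assms(1) that(1) q_bounds(1)] that(3) by simp
    with that(2) show ?thesis
      by simp
  qed
  show ?thesis
    unfolding admissible_last_def
  proof (intro notI; elim exE conjE disjE)
    fix i j assume H: "i < j" "j < length xs" "xs!i < Suc (xs!q)" "Suc (xs!q) \<le> xs!j" "xs!j < K"
    have "j < q"
      by (rule is_last_below_less[OF q]) (use H in auto)
    with H q_bounds have "has_132_below K xs"
      unfolding has_132_below_def using less_q[of i]
      by (intro exI[of _ i] exI[of _ j] exI[of _ q]) auto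
    with assms(2) show False
      by (simp add: avoids_132_213_below_def)
  next
    fix i j assume H: "i < j" "j < length xs" "xs!j < xs!i" "xs!i < Suc (xs!q)"
    have "j < q"
      by (rule is_last_below_less[OF q]) (use H q_bounds in auto)
    with H q_bounds have "has_213_below K xs"
      unfolding has_213_below_def using less_q[of i]
      by (intro exI[of _ i] exI[of _ j] exI[of _ q]) auto
    with assms(2) show False
      by (simp add: avoids_132_213_below_def)
  qed
qed

lemma admissible_last_eq_Suc_last_below:
  assumes small_values: "{1..<K} \<subseteq> set xs" and q: "is_last_below K xs q"
    and m: "admissible_last m K xs" "2 \<le> m" "m \<le> K"
  shows "m = Suc (xs!q)"
proof (rule ccontr)
  have q_bounds: "q < length xs" "xs!q < K"
    using q by (simp_all add: is_last_below_def)
  have position: "\<exists>p<length xs. xs!p = v" if "1 \<le> v" "v < K" for v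
    using small_values that by (auto simp: in_set_conv_nth)
  assume "m \<noteq> Suc (xs!q)"
  then consider "m \<le> xs!q" | "Suc (xs!q) < m"
    by linarith
  then show False
  proof cases
    case 1
    obtain p where p: "p < length xs" "xs!p = 1"
      using position[of 1] m by auto
    have "p < q"
      by (rule is_last_below_less[OF q]) (use p q_bounds 1 m(2) in auto)
    with m(1) q_bounds have "\<not> (xs!p < m \<and> m \<le> xs!q \<and> xs!q < K)"
      unfolding admissible_last_def by blast
    with p 1 m(2) q_bounds show False
      by linarith
  next
    case 2
    obtain p where p: "p < length xs" "xs!p = Suc (xs!q)"
      using position[of "Suc (xs!q)"] 2 m(3) by auto
    have "p < q"
      by (rule is_last_below_less[OF q]) (use p 2 m(3) in auto)
    with m(1) q_bounds have "\<not> (xs!q < xs!p \<and> xs!p < m)"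
      unfolding admissible_last_def by blast
    with p 2 show False
      by linarith
  qed
qed

lemma card_admissible_last:
  assumes xs: "xs \<in> permutations_of_set {1..M}" and avoids: "avoids_132_213_below K xs"
    and K: "2 \<le> K" "K \<le> Suc M"
  shows "card {m \<in> {1..K}. admissible_last m K xs} = 2"
proof -
  have set_xs: "set xs = {1..M}" and "distinct xs"
    using permutations_of_setD[OF xs] by simp_all
  have "1 \<in> set xs"
    using set_xs K by simp
  moreover have "1 < K"
    using K by simp
  ultimately obtain q where q: "is_last_below K xs q"
    by (blast dest: ex_is_last_below)
  then have q_bounds: "q < length xs" "xs!q < K"
    by (simp_all add: is_last_below_def)
  have "0 < xs!q"
    using nth_mem[OF q_bounds(1)] set_xs by auto
  have "{1..<K} \<subseteq> set xs"
    using K by (simp add: set_xs subset_iff)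
  have "{m \<in> {1..K}. admissible_last m K xs} = {1, Suc (xs!q)}"
  proof (intro equalityI subsetI)
    fix m assume m: "m \<in> {m \<in> {1..K}. admissible_last m K xs}"
    show "m \<in> {1, Suc (xs!q)}"
    proof (cases "m = 1")
      case False
      have "m = Suc (xs!q)"
        by (rule admissible_last_eq_Suc_last_below[OF \<open>{1..<K} \<subseteq> set xs\<close> q]) (use m False in auto)
      then show ?thesis
        by simp
    qed simp
  next
    have "0 \<notin> set xs"
      using set_xs by simp
    then have "admissible_last 1 K xs"
      by (rule admissible_last_1)
    moreover have "admissible_last (Suc (xs!q)) K xs"
      using \<open>distinct xs\<close> avoids q by (rule admissible_last_Suc_last_below)
    moreover have "1 \<in> {1..K}" "Suc (xs!q) \<in> {1..K}"
      using K q_bounds by simp_all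
    ultimately show "m \<in> {m \<in> {1..K}. admissible_last m K xs}" if "m \<in> {1, Suc (xs!q)}" for m
      using that by blast
  qed
  with \<open>0 < xs!q\<close> show ?thesis
    by simp
qed

section \<open>Counting\<close>

lemma mset_eq_iff_in_permutations_of_set:
  "mset xs = mset [1..<n+1] \<longleftrightarrow> xs \<in> permutations_of_set {1..n}"
proof
  have set_upt: "set [1..<n+1] = {1..n}"
    by auto
  show "xs \<in> permutations_of_set {1..n}" if "mset xs = mset [1..<n+1]"
  proof
    show "set xs = {1..n}"
      using mset_eq_setD[OF that] set_upt by simp
    show "distinct xs"
      using mset_eq_imp_distinct_iff[OF that] by simp
  qed
  show "mset xs = mset [1..<n+1]" if "xs \<in> permutations_of_set {1..n}"
    using permutations_of_setD[OF that] set_upt set_eq_iff_mset_eq_distinct[of xs "[1..<n+1]"] by simp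
qed
definition Av :: "nat \<Rightarrow> nat list set" where
  "Av N = {xs \<in> permutations_of_set {1..N}. \<not> has_1324 xs \<and> \<not> has_2134 xs}"

definition Av_below :: "nat \<Rightarrow> nat \<Rightarrow> nat list set" where
  "Av_below N L = {xs \<in> Av N. avoids_132_213_below L xs}"

lemma finite_Av: "finite (Av N)"
  unfolding Av_def by (rule finite_subset[OF _ finite_permutations_of_set]) blast

lemma finite_Av_below: "finite (Av_below N L)"
  unfolding Av_below_def using finite_Av by simp

lemma last_in_Av:
  assumes "ys \<in> Av (Suc N)"
  shows "ys \<noteq> []" "last ys \<in> {1..Suc N}"
proof -
  have set_ys: "set ys = {1..Suc N}"
    using assms by (simp add: Av_def permutations_of_set_def)
  then show ne: "ys \<noteq> []"
    by auto
  show "last ys \<in> {1..Suc N}"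
    using last_in_set[OF ne] unfolding set_ys .
qed

lemma s_Suc_eq_card_Av: "s (Suc N) l = card {ys \<in> Av (Suc N). last ys = l}"
proof -
  have "ys ! N = last ys" if "ys \<in> permutations_of_set {1..Suc N}" for ys
    using length_finite_permutations_of_set[OF that] by (subst last_conv_nth) auto
  then show ?thesis
    unfolding s_def Av_def avoids_def mset_eq_iff_in_permutations_of_set contains_1324_iff contains_2134_iff
    by (intro arg_cong[where f = card]) auto
qed

lemma card_Av_Suc_last_in:
  assumes "A \<subseteq> {1..Suc N}"
  shows "card {ys \<in> Av (Suc N). last ys \<in> A} = (\<Sum>m\<in>A. card (Av_below N m))"
proof -
  have "card {ys \<in> Av (Suc N). last ys \<in> A} =
      card {ys \<in> permutations_of_set {1..Suc N}. last ys \<in> A \<and> \<not> has_1324 ys \<and> \<not> has_2134 ys}"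
    unfolding Av_def by (intro arg_cong[where f = card]) auto
  also have "\<dots> = (\<Sum>m\<in>A. card {xs \<in> permutations_of_set {1..N}.
      \<not> has_1324 (insert_last m xs) \<and> \<not> has_2134 (insert_last m xs)})"
    using assms by (rule card_permutations_last_in)
  also have "\<dots> = (\<Sum>m\<in>A. card (Av_below N m))"
    unfolding Av_below_def Av_def avoids_1324_2134_insert_last
    by (intro sum.cong refl arg_cong[where f = card]) auto
  finally show ?thesis .
qed

lemma s_Suc_eq_card_Av_below: "l \<in> {1..Suc N} \<Longrightarrow> s (Suc N) l = card (Av_below N l)"
  using card_Av_Suc_last_in[of "{l}" N] by (simp add: s_Suc_eq_card_Av)

lemma sum_s_Suc_eq_card_Av:
  assumes "A \<subseteq> {1..Suc N}"
  shows "(\<Sum>m\<in>A. s (Suc N) m) = card {ys \<in> Av (Suc N). last ys \<in> A}"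
proof -
  have "(\<Sum>m\<in>A. s (Suc N) m) = (\<Sum>m\<in>A. card (Av_below N m))"
    using assms by (intro sum.cong refl s_Suc_eq_card_Av_below) blast
  also have "\<dots> = card {ys \<in> Av (Suc N). last ys \<in> A}"
    using card_Av_Suc_last_in[OF assms] by simp
  finally show ?thesis .
qed

lemma sum_card_filter_swap:
  assumes "finite A" "finite B"
  shows "(\<Sum>a\<in>A. card {b \<in> B. R a b}) = (\<Sum>b\<in>B. card {a \<in> A. R a b})"
  unfolding card_eq_sum by (rule sum.swap_restrict[OF assms])

lemma avoids_insert_last_below_iff:
  assumes "1 \<le> m" "m < L"
  shows "\<not> has_1324 (insert_last m xs) \<and> \<not> has_2134 (insert_last m xs) \<and>
      avoids_132_213_below L (insert_last m xs) \<longleftrightarrow>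
    \<not> has_1324 xs \<and> \<not> has_2134 xs \<and> avoids_132_213_below (L - 1) xs \<and> admissible_last m (L - 1) xs"
proof -
  have "m \<le> L - 1"
    using assms by simp
  then show ?thesis
    using avoids_1324_2134_insert_last[of m xs] avoids_132_213_below_insert_last[OF assms(2), of xs]
      avoids_132_213_below_mono[of "L - 1" xs m]
    by blast
qed

lemma card_Av_below_last_less:
  assumes L: "3 \<le> L" "L \<le> Suc (Suc M)"
  shows "card {ys \<in> Av_below (Suc M) L. last ys \<in> {1..L - 1}} = 2 * card (Av_below M (L - 1))"
proof -
  let ?B = "Av_below M (L - 1)"
  let ?P = "\<lambda>ys. \<not> has_1324 ys \<and> \<not> has_2134 ys \<and> avoids_132_213_below L ys"
  have "card {ys \<in> Av_below (Suc M) L. last ys \<in> {1..L - 1}} =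
      card {ys \<in> permutations_of_set {1..Suc M}. last ys \<in> {1..L - 1} \<and> ?P ys}"
    unfolding Av_below_def Av_def by (intro arg_cong[where f = card]) auto
  also have "\<dots> = (\<Sum>m\<in>{1..L - 1}. card {xs \<in> permutations_of_set {1..M}. ?P (insert_last m xs)})"
    by (rule card_permutations_last_in) (use L in auto)
  also have "\<dots> = (\<Sum>m\<in>{1..L - 1}. card {xs \<in> ?B. admissible_last m (L - 1) xs})"
  proof (intro sum.cong refl arg_cong[where f = card] Collect_cong)
    fix m xs assume "m \<in> {1..L - 1}"
    then have "1 \<le> m" "m < L"
      using L by auto
    from avoids_insert_last_below_iff[OF this, of xs]
    show "(xs \<in> permutations_of_set {1..M} \<and> ?P (insert_last m xs)) \<longleftrightarrow>
        (xs \<in> ?B \<and> admissible_last m (L - 1) xs)"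
      unfolding Av_below_def Av_def by blast
  qed
  also have "\<dots> = (\<Sum>xs\<in>?B. card {m \<in> {1..L - 1}. admissible_last m (L - 1) xs})"
    by (rule sum_card_filter_swap) (simp_all add: finite_Av_below)
  also have "\<dots> = (\<Sum>xs\<in>?B. 2)"
    using L by (intro sum.cong refl card_admissible_last) (auto simp: Av_below_def Av_def)
  finally show ?thesis
    by simp
qed

lemma s_Suc_eq_1:
  assumes "N \<le> 1" "l \<in> {1..Suc N}"
  shows "s (Suc N) l = 1"
proof -
  have "\<not> has_1324 xs \<and> \<not> has_2134 xs \<and> avoids_132_213_below l xs" if "length xs \<le> 1" for xs
    using that unfolding has_1324_def has_2134_def avoids_132_213_below_def has_132_below_def has_213_below_def
    by auto
  then have "Av_below N l = permutations_of_set {1..N}"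
    using assms(1) length_finite_permutations_of_set unfolding Av_below_def Av_def by fastforce
  moreover have "fact N = (1::nat)"
    using assms(1) by (cases N) auto
  ultimately show ?thesis
    using assms(2) by (simp add: s_Suc_eq_card_Av_below)
qed

lemma s_eq_sum_if_le_3:
  assumes "3 \<le> n" "1 \<le> l" "l \<le> 3"
  shows "s n l = (\<Sum>m=1..n-1. s (n-1) m)"
proof -
  define N where "N = n - 2"
  have n: "n = Suc (Suc N)"
    using assms(1) by (simp add: N_def)
  have "s n l = card (Av_below (Suc N) l)"
    unfolding n using assms n by (intro s_Suc_eq_card_Av_below) auto
  also have "Av_below (Suc N) l = {ys \<in> Av (Suc N). last ys \<in> {1..Suc N}}"
  proof -
    have "avoids_132_213_below l ys" if "ys \<in> Av (Suc N)" for ys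
    proof (rule avoids_132_213_below_3)
      show "0 \<notin> set ys"
        using that by (simp add: Av_def permutations_of_set_def)
    qed (use assms in simp)
    then show ?thesis
      unfolding Av_below_def using last_in_Av(2) by blast
  qed
  also have "card \<dots> = (\<Sum>m=1..Suc N. s (Suc N) m)"
    by (rule sum_s_Suc_eq_card_Av[symmetric]) simp
  finally show ?thesis
    unfolding n by simp
qed

lemma s_eq_if_ge_4:
  assumes "4 \<le> l" "l \<le> n"
  shows "s n l = 2 * s (n-1) (l-1) + (\<Sum>m=l..n-1. s (n-1) m)"
proof -
  define M where "M = n - 2"
  have n: "n = Suc (Suc M)"
    using assms by (simp add: M_def)
  let ?X = "Av_below (Suc M) l"
  let ?low = "{ys \<in> ?X. last ys \<in> {1..l - 1}}"
  let ?high = "{ys \<in> Av (Suc M). last ys \<in> {l..Suc M}}"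
  have "s n l = card ?X"
    unfolding n using assms n by (intro s_Suc_eq_card_Av_below) auto
  also have "?X = ?low \<union> ?high"
  proof (intro equalityI subsetI)
    fix ys assume "ys \<in> ?X"
    then show "ys \<in> ?low \<union> ?high"
      using last_in_Av(2)[of ys M] by (auto simp: Av_below_def)
  next
    fix ys assume "ys \<in> ?low \<union> ?high"
    then show "ys \<in> ?X"
      using last_in_Av(1)[of ys M]
      by (auto simp: Av_below_def Av_def intro: avoids_132_213_below_if_le_last)
  qed
  also have "card (?low \<union> ?high) = card ?low + card ?high"
    by (rule card_Un_disjoint) (auto simp: finite_Av finite_Av_below)
  also have "card ?low = 2 * card (Av_below M (l - 1))"
    by (rule card_Av_below_last_less) (use assms n in auto)
  also have "card (Av_below M (l - 1)) = s (Suc M) (l - 1)"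
    by (rule s_Suc_eq_card_Av_below[symmetric]) (use assms n in auto)
  also have "card ?high = (\<Sum>m=l..Suc M. s (Suc M) m)"
    by (rule sum_s_Suc_eq_card_Av[symmetric]) (use assms in auto)
  finally show ?thesis
    unfolding n by simp
qed

theorem proposition5p1:
  shows "s 1 1 = 1 \<and> s 2 1 = 1 \<and> s 2 2 = 1 \<and>
    (\<forall>n\<ge>3. s n 1 = (\<Sum>m=1..n-1. s (n-1) m) \<and>
             s n 2 = (\<Sum>m=1..n-1. s (n-1) m) \<and>
             s n 3 = (\<Sum>m=1..n-1. s (n-1) m)) \<and>
    (\<forall>n l. 4 \<le> l \<and> l \<le> n \<longrightarrow>
             s n l = 2 * s (n-1) (l-1) + (\<Sum>m=l..n-1. s (n-1) m))"
proof (intro conjI allI impI)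
  show "s 1 1 = 1" "s 2 1 = 1" "s 2 2 = 1"
    using s_Suc_eq_1[of 0 1] s_Suc_eq_1[of 1 1] s_Suc_eq_1[of 1 2] by (simp_all add: numeral_2_eq_2)
next
  fix n :: nat assume "3 \<le> n"
  then show "s n 1 = (\<Sum>m=1..n-1. s (n-1) m)" "s n 2 = (\<Sum>m=1..n-1. s (n-1) m)"
    "s n 3 = (\<Sum>m=1..n-1. s (n-1) m)"
    by (simp_all add: s_eq_sum_if_le_3)
next
  fix n l :: nat assume "4 \<le> l \<and> l \<le> n"
  then show "s n l = 2 * s (n-1) (l-1) + (\<Sum>m=l..n-1. s (n-1) m)"
    by (simp add: s_eq_if_ge_4)
qed

end
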